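(* The Hausdorff dimension of the space $\mathcal G_2$ of marked groups on two generators satisfies $\dim_H(\mathcal G_2)\ge\log(2)/6$; in particular it is nonzero.
   Context: $\mathcal G_2$ is the set of normal subgroups of the free group $\mathbb F(a,b)$ (equivalently, marked groups with an ordered generating pair, up to marked isomorphism), endowed with the ultrametric $d(N_1,N_2)=e^{-\lambda}$ for $N_1\ne N_2$, where $\lambda$ is the minimal word length (with respect to $a,b$) of an element of $N_1\triangle N_2$. $\log$ is the natural logarithm. *)

theory Defs
  imports Complex_Main "HOL-Library.Extended_Nonnegative_Real" "HOL-Algebra.Coset"
begin

text \<open>A letter is a pair (g, i): g = False means generator a, g = True means b;
  i = True means the inverse of that generator. Words are lists of letters.\<close>

type_synonym letter = "bool \<times> bool"

definition red_cons :: "letter \<Rightarrow> letter list \<Rightarrow> letter list" where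
  "red_cons x w = (case w of [] \<Rightarrow> [x]
     | y # ys \<Rightarrow> (if fst x = fst y \<and> snd x \<noteq> snd y then ys else x # w))"

definition reduce :: "letter list \<Rightarrow> letter list" where
  "reduce w = foldr red_cons w []"

definition free_group2 :: "letter list monoid" where
  "free_group2 = \<lparr> carrier = {w. reduce w = w}, mult = (\<lambda>u v. reduce (u @ v)), one = [] \<rparr>"

definition G2 :: "letter list set set" where
  "G2 = {N. N \<lhd> free_group2}"

definition marked_dist :: "letter list set \<Rightarrow> letter list set \<Rightarrow> real" where
  "marked_dist N1 N2 = (if N1 = N2 then 0 else
     exp (- real (LEAST n. \<exists>w \<in> (N1 - N2) \<union> (N2 - N1). length w = n)))"

definition set_diam :: "('a \<Rightarrow> 'a \<Rightarrow> real) \<Rightarrow> 'a set \<Rightarrow> real" where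
  "set_diam d A = (if A = {} then 0 else Sup {d x y | x y. x \<in> A \<and> y \<in> A})"

text \<open>Countable delta-covers of X (finite covers included by allowing empty sets).\<close>

definition delta_covers :: "('a \<Rightarrow> 'a \<Rightarrow> real) \<Rightarrow> real \<Rightarrow> 'a set \<Rightarrow> (nat \<Rightarrow> 'a set) set" where
  "delta_covers d \<delta> X = {U. X \<subseteq> (\<Union>n. U n) \<and> (\<forall>n. \<forall>x\<in>U n. \<forall>y\<in>U n. d x y \<le> \<delta>)}"

definition hausdorff_content :: "('a \<Rightarrow> 'a \<Rightarrow> real) \<Rightarrow> real \<Rightarrow> real \<Rightarrow> 'a set \<Rightarrow> ennreal" where
  "hausdorff_content d s \<delta> X =
     (INF U \<in> delta_covers d \<delta> X. (\<Sum>n. ennreal (set_diam d (U n) powr s)))"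

definition hausdorff_measure :: "('a \<Rightarrow> 'a \<Rightarrow> real) \<Rightarrow> real \<Rightarrow> 'a set \<Rightarrow> ennreal" where
  "hausdorff_measure d s X = (SUP \<delta> \<in> {0<..}. hausdorff_content d s \<delta> X)"

text \<open>dim_H X = inf { s > 0 : H^s(X) = 0 } (with inf of the empty set = +infinity).\<close>

definition hausdorff_dim :: "('a \<Rightarrow> 'a \<Rightarrow> real) \<Rightarrow> 'a set \<Rightarrow> ereal" where
  "hausdorff_dim d X = Inf (ereal ` {s. s > 0 \<and> hausdorff_measure d s X = 0})"

end

theory Submission
  imports Defs "HOL-Library.Poly_Mapping" "HOL-Analysis.Analysis"
begin

(* We embed the Cantor set of subsets X of the natural numbers into G_2 by a map
   X \<mapsto> N_X which is "Hoelder-invertible" with respect to the binary value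
   r(X) = \<Sum>_{k\<in>X} 2^-(k+1): whenever X and Y first differ at k, the normal subgroups N_X and
   N_Y differ on an explicit word w_k of length 4k+8, so d(N_X,N_Y) \<ge> exp(-(4k+8)) while
   |r(X) - r(Y)| \<le> 2^-k.  Hence |r(X) - r(Y)| \<le> 4 d(N_X,N_Y)^(ln 2 / 4), and every cover of G_2
   by sets of diameter D_n yields a cover of [0,1) by intervals of length 8 D_n^(ln 2 / 4);
   Lebesgue measure then forces the Hausdorff content in every dimension s \<le> ln 2 / 4 to be
   at least 1/8, so dim_H G_2 \<ge> ln 2 / 4 \<ge> ln 2 / 6. *)

section \<open>The free group on reduced words\<close>

definition inv_letter :: "letter \<Rightarrow> letter" where
  "inv_letter x = (fst x, \<not> snd x)"

lemma inv_letter_inv_letter [simp]: "inv_letter (inv_letter x) = x"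
  by (simp add: inv_letter_def)

lemma red_cons_Nil: "red_cons x [] = [x]"
  and red_cons_Cons: "red_cons x (y # ys) = (if y = inv_letter x then ys else x # y # ys)"
  by (auto simp: red_cons_def inv_letter_def prod_eq_iff)

fun freely_reduced :: "letter list \<Rightarrow> bool" where
  "freely_reduced (x # y # ys) = (y \<noteq> inv_letter x \<and> freely_reduced (y # ys))"
| "freely_reduced _ = True"

lemma reduced_tl: "freely_reduced (y # ys) \<Longrightarrow> freely_reduced ys"
  by (cases ys) auto

lemma reduced_red_cons: "freely_reduced w \<Longrightarrow> freely_reduced (red_cons x w)"
  by (cases w) (auto simp: red_cons_Nil red_cons_Cons dest: reduced_tl)

lemma red_cons_cancel:
  assumes "freely_reduced w"
  shows "red_cons (inv_letter x) (red_cons x w) = w"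
proof (cases w)
  case (Cons y ys)
  show ?thesis
  proof (cases "y = inv_letter x")
    case True
    with Cons assms show ?thesis
      by (cases ys) (auto simp: red_cons_Nil red_cons_Cons)
  qed (simp add: Cons red_cons_Cons)
qed (simp add: red_cons_Nil red_cons_Cons)

definition prepend :: "letter list \<Rightarrow> letter list \<Rightarrow> letter list" where
  "prepend u z = foldr red_cons u z"

lemma prepend_Nil [simp]: "prepend [] z = z"
  and prepend_Cons [simp]: "prepend (x # u) z = red_cons x (prepend u z)"
  and prepend_append: "prepend (u @ v) z = prepend u (prepend v z)"
  by (simp_all add: prepend_def)

lemma reduce_eq_prepend: "reduce w = prepend w []"
  by (simp add: reduce_def prepend_def)

lemma reduced_prepend: "freely_reduced z \<Longrightarrow> freely_reduced (prepend u z)"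
  by (induction u) (auto intro: reduced_red_cons)

lemma reduced_reduce: "freely_reduced (reduce w)"
  by (simp add: reduce_eq_prepend reduced_prepend)

lemma reduce_reduced: "freely_reduced w \<Longrightarrow> reduce w = w"
proof (induction w)
  case (Cons x w)
  then have "reduce w = w" by (auto dest: reduced_tl)
  with Cons.prems show ?case
    by (cases w) (auto simp: reduce_def red_cons_Nil red_cons_Cons)
qed (simp add: reduce_def)

lemma carrier_free_group2: "w \<in> carrier free_group2 \<longleftrightarrow> freely_reduced w"
proof -
  have "w \<in> carrier free_group2 \<longleftrightarrow> reduce w = w" by (simp add: free_group2_def)
  then show ?thesis using reduce_reduced reduced_reduce[of w] by auto
qed

lemma prepend_red_cons:
  assumes "freely_reduced z"
  shows "prepend (red_cons x r) z = red_cons x (prepend r z)"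
proof (cases r)
  case (Cons y ys)
  have "red_cons (inv_letter y) (red_cons y (prepend ys z)) = prepend ys z"
    using red_cons_cancel reduced_prepend[OF assms] by blast
  then show ?thesis by (auto simp: Cons red_cons_Cons)
qed (simp add: red_cons_Nil)

lemma prepend_reduce: "freely_reduced z \<Longrightarrow> prepend (reduce u) z = prepend u z"
  by (induction u) (simp_all add: reduce_def prepend_red_cons)

lemma reduce_append: "reduce (u @ v) = prepend u (reduce v)"
  by (simp add: reduce_eq_prepend prepend_append)

definition inv_word :: "letter list \<Rightarrow> letter list" where
  "inv_word w = rev (map inv_letter w)"

lemma prepend_inv_word: "freely_reduced z \<Longrightarrow> prepend (inv_word w) (prepend w z) = z"
proof (induction w arbitrary: z)
  case (Cons x w)
  have "prepend (inv_word (x # w)) (prepend (x # w) z)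
      = prepend (inv_word w) (red_cons (inv_letter x) (red_cons x (prepend w z)))"
    by (simp add: inv_word_def prepend_append)
  also have "red_cons (inv_letter x) (red_cons x (prepend w z)) = prepend w z"
    using red_cons_cancel reduced_prepend[OF Cons.prems] by blast
  finally show ?case using Cons by simp
qed (simp add: inv_word_def)

lemma group_free_group2: "group free_group2"
proof (rule groupI)
  fix x y z
  have "reduce (reduce (x @ y) @ z) = prepend (reduce (x @ y)) (reduce z)"
    by (rule reduce_append)
  also have "\<dots> = prepend (x @ y) (reduce z)"
    by (rule prepend_reduce[OF reduced_reduce])
  also have "\<dots> = prepend x (reduce (y @ z))"
    by (simp add: prepend_append reduce_append)
  also have "\<dots> = reduce (x @ reduce (y @ z))"
    by (simp only: reduce_append[of x] reduce_reduced[OF reduced_reduce])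
  finally show "x \<otimes>\<^bsub>free_group2\<^esub> y \<otimes>\<^bsub>free_group2\<^esub> z
      = x \<otimes>\<^bsub>free_group2\<^esub> (y \<otimes>\<^bsub>free_group2\<^esub> z)"
    by (simp add: free_group2_def)
next
  fix x
  have "reduce (reduce (inv_word x) @ x) = prepend (reduce (inv_word x)) (reduce x)"
    by (rule reduce_append)
  also have "\<dots> = prepend (inv_word x) (reduce x)"
    by (rule prepend_reduce[OF reduced_reduce])
  also have "\<dots> = []"
    by (simp add: reduce_eq_prepend prepend_inv_word)
  finally show "\<exists>y\<in>carrier free_group2. y \<otimes>\<^bsub>free_group2\<^esub> x = \<one>\<^bsub>free_group2\<^esub>"
    by (intro bexI[of _ "reduce (inv_word x)"])
      (simp_all add: free_group2_def reduce_reduced reduced_reduce)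
next
  fix x assume "x \<in> carrier free_group2"
  then show "\<one>\<^bsub>free_group2\<^esub> \<otimes>\<^bsub>free_group2\<^esub> x = x"
    by (simp add: free_group2_def)
qed (simp_all add: free_group2_def reduce_reduced reduced_reduce)

section \<open>A Heisenberg group over Laurent polynomials\<close>

(* Laurent polynomials Z[t, t^-1] as finitely supported functions, with t^n = tpow n. *)
type_synonym laurent = "int \<Rightarrow>\<^sub>0 int"

definition tpow :: "int \<Rightarrow> laurent" where
  "tpow n = Poly_Mapping.single n 1"

lemma tpow_mult: "tpow a * tpow b = tpow (a + b)"
  by (simp add: tpow_def Poly_Mapping.mult_single)

lemma tpow_0 [simp]: "tpow 0 = 1"
  by (simp add: tpow_def)

lemma lookup_tpow: "Poly_Mapping.lookup (tpow a) j = (if j = a then 1 else 0)"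
  by (simp add: tpow_def Poly_Mapping.lookup_single when_def)

(* H = Z \<ltimes> Heis(Z[t,t^-1]): n \<in> Z acts by t^n on the x-coordinate and by t^-n on the
   y-coordinate, and z collects the Heisenberg cocycle x \<cdot> y.  The z-axis is central. *)
type_synonym heis_elem = "int \<times> laurent \<times> laurent \<times> laurent"

fun heis_mult :: "heis_elem \<Rightarrow> heis_elem \<Rightarrow> heis_elem" where
  "heis_mult (n, x, y, z) (n', x', y', z') =
     (n + n', x + tpow n * x', y + tpow (- n) * y', z + z' + x * (tpow (- n) * y'))"

fun heis_inv :: "heis_elem \<Rightarrow> heis_elem" where
  "heis_inv (n, x, y, z) = (- n, - (tpow (- n) * x), - (tpow n * y), x * y - z)"

definition heis :: "heis_elem monoid" where
  "heis = \<lparr>carrier = UNIV, monoid.mult = heis_mult, one = (0, 0, 0, 0)\<rparr>"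

lemma heis_mult_assoc: "heis_mult (heis_mult a b) c = heis_mult a (heis_mult b c)"
proof -
  obtain n x y z n' x' y' z' n'' x'' y'' z''
    where abc: "a = (n, x, y, z)" "b = (n', x', y', z')" "c = (n'', x'', y'', z'')"
    by (cases a, cases b, cases c) auto
  have e1: "tpow n * tpow (- n - n') = tpow (- n')"
    and e2: "tpow (- n) * tpow (- n') = tpow (- n - n')"
    and e3: "tpow n * tpow n' = tpow (n + n')"
    by (simp_all add: tpow_mult)
  have "fst (heis_mult (heis_mult a b) c) = fst (heis_mult a (heis_mult b c))"
    by (simp add: abc)
  moreover have "fst (snd (heis_mult (heis_mult a b) c)) = fst (snd (heis_mult a (heis_mult b c)))"
    by (simp add: abc distrib_left e3 flip: mult.assoc)
  moreover have "fst (snd (snd (heis_mult (heis_mult a b) c)))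
      = fst (snd (snd (heis_mult a (heis_mult b c))))"
    by (simp add: abc distrib_left e2 flip: mult.assoc)
  moreover have "snd (snd (snd (heis_mult (heis_mult a b) c)))
      = snd (snd (snd (heis_mult a (heis_mult b c))))"
    by (simp add: abc distrib_left distrib_right e1 e2 flip: mult.assoc)
  ultimately show ?thesis by (simp add: prod_eq_iff)
qed

lemma group_heis: "group heis"
proof (rule groupI)
  fix g :: heis_elem
  obtain n x y z where g: "g = (n, x, y, z)" by (cases g) auto
  have "tpow (- n) * x * (tpow n * y) = (tpow (- n) * tpow n) * (x * y)"
    by (simp only: mult_ac)
  then have "heis_mult (heis_inv g) g = (0, 0, 0, 0)"
    by (simp add: g tpow_mult distrib_left flip: mult.assoc)
  then show "\<exists>h\<in>carrier heis. h \<otimes>\<^bsub>heis\<^esub> g = \<one>\<^bsub>heis\<^esub>"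
    by (intro bexI[of _ "heis_inv g"]) (simp_all add: heis_def)
qed (auto simp: heis_def heis_mult_assoc)

definition antisym_laurent :: "nat set \<Rightarrow> laurent set" where
  "antisym_laurent X = {z. (\<forall>j. Poly_Mapping.lookup z (- j) = - Poly_Mapping.lookup z j)
                         \<and> (\<forall>k. k \<notin> X \<longrightarrow> Poly_Mapping.lookup z (int k + 1) = 0)}"

definition central_part :: "nat set \<Rightarrow> heis_elem set" where
  "central_part X = {(0, 0, 0, z) | z. z \<in> antisym_laurent X}"

lemma heis_central: "heis_mult (0, 0, 0, z) g = heis_mult g (0, 0, 0, z)"
  by (cases g) (simp add: add.commute)

lemma subgroup_central_part: "subgroup (central_part X) heis"
proof (rule group.subgroupI[OF group_heis])
  fix c assume "c \<in> central_part X"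
  then obtain z where c: "c = (0, 0, 0, z)" and z: "z \<in> antisym_laurent X"
    by (auto simp: central_part_def)
  have "inv\<^bsub>heis\<^esub> c = (0, 0, 0, - z)"
    by (rule group.inv_equality[OF group_heis]) (auto simp: c heis_def)
  moreover have "- z \<in> antisym_laurent X"
    using z by (simp add: antisym_laurent_def)
  ultimately show "inv\<^bsub>heis\<^esub> c \<in> central_part X"
    by (auto simp: central_part_def)
next
  fix c d assume "c \<in> central_part X" "d \<in> central_part X"
  then show "c \<otimes>\<^bsub>heis\<^esub> d \<in> central_part X"
    by (auto simp: central_part_def antisym_laurent_def heis_def Poly_Mapping.lookup_add)
next
  have "(0, 0, 0, 0) \<in> central_part X"
    by (auto simp: central_part_def antisym_laurent_def)
  then show "central_part X \<noteq> {}" by blast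
qed (simp add: heis_def)

lemma (in group_hom) normal_vimage_central:
  assumes sub: "subgroup C H"
    and central: "\<And>c g. c \<in> C \<Longrightarrow> g \<in> carrier H \<Longrightarrow> c \<otimes>\<^bsub>H\<^esub> g = g \<otimes>\<^bsub>H\<^esub> c"
  shows "{x \<in> carrier G. h x \<in> C} \<lhd> G"
proof (rule G.normal_invI)
  show "subgroup {x \<in> carrier G. h x \<in> C} G"
    by (rule G.subgroupI) (auto simp: subgroup.one_closed[OF sub]
        intro: subgroup.m_closed[OF sub] subgroup.m_inv_closed[OF sub])
next
  fix g n assume g: "g \<in> carrier G" and n: "n \<in> {x \<in> carrier G. h x \<in> C}"
  then have "h (g \<otimes> n \<otimes> inv g) = h n \<otimes>\<^bsub>H\<^esub> h g \<otimes>\<^bsub>H\<^esub> inv\<^bsub>H\<^esub> h g"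
    by (simp add: central)
  also have "\<dots> = h n"
    using g n by (simp add: H.m_assoc subgroup.mem_carrier[OF sub])
  finally show "g \<otimes> n \<otimes> inv g \<in> {x \<in> carrier G. h x \<in> C}"
    using g n by simp
qed

section \<open>The normal subgroups N_X and the witness words\<close>

fun letter_image :: "letter \<Rightarrow> heis_elem" where
  "letter_image (False, False) = (1, 0, 0, 0)"
| "letter_image (False, True) = (- 1, 0, 0, 0)"
| "letter_image (True, False) = (0, 1, 1, 0)"
| "letter_image (True, True) = (0, - 1, - 1, 1)"

lemma letter_image_inv_letter:
  "heis_mult (letter_image x) (letter_image (inv_letter x)) = (0, 0, 0, 0)"
  by (cases x rule: letter_image.cases) (simp_all add: inv_letter_def)

definition word_image :: "letter list \<Rightarrow> heis_elem" where
  "word_image w = foldr (\<lambda>l. heis_mult (letter_image l)) w (0, 0, 0, 0)"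

lemma word_image_Nil [simp]: "word_image [] = (0, 0, 0, 0)"
  and word_image_Cons [simp]: "word_image (x # w) = heis_mult (letter_image x) (word_image w)"
  by (simp_all add: word_image_def)

lemma heis_mult_one [simp]: "heis_mult (0, 0, 0, 0) g = g" "heis_mult g (0, 0, 0, 0) = g"
  by (cases g; simp)+

lemma word_image_append: "word_image (u @ v) = heis_mult (word_image u) (word_image v)"
  by (induction u) (simp_all add: heis_mult_assoc)

lemma word_image_red_cons: "word_image (red_cons x w) = heis_mult (letter_image x) (word_image w)"
proof (cases w)
  case (Cons y ys)
  show ?thesis
    using letter_image_inv_letter[of x]
    by (simp add: Cons red_cons_Cons flip: heis_mult_assoc)
qed (simp add: red_cons_Nil)

lemma word_image_reduce: "word_image (reduce w) = word_image w"
proof -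
  have "word_image (prepend u z) = heis_mult (word_image u) (word_image z)" for u z
    by (induction u) (simp_all add: word_image_red_cons heis_mult_assoc)
  then show ?thesis by (simp add: reduce_eq_prepend)
qed

lemma word_image_hom: "group_hom free_group2 heis word_image"
  by (rule group_hom.intro[OF group_free_group2 group_heis])
     (auto intro!: homI simp: group_hom_axioms_def free_group2_def heis_def
       word_image_reduce word_image_append)

definition marked_subgroup :: "nat set \<Rightarrow> letter list set" where
  "marked_subgroup X = {w \<in> carrier free_group2. word_image w \<in> central_part X}"

lemma marked_subgroup_in_G2: "marked_subgroup X \<in> G2"
  unfolding G2_def marked_subgroup_def mem_Collect_eq
  by (rule group_hom.normal_vimage_central[OF word_image_hom subgroup_central_part])
     (auto simp: heis_def central_part_def heis_central)

(* w_k = a^m b a^-m \<cdot> b \<cdot> a^m b^-1 a^-m \<cdot> b^-1 with m = k+1 (a = (False,False),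
   b = (True,False)) is the commutator [a^m b a^-m, b]; its image is the central element
   (0, 0, 0, t^m - t^-m), which lies in the central part for X exactly when k \<in> X. *)
definition witness_word :: "nat \<Rightarrow> letter list" where
  "witness_word k =
     replicate (Suc k) (False, False) @ (True, False) # replicate (Suc k) (False, True) @
     (True, False) # replicate (Suc k) (False, False) @ (True, True) #
     replicate (Suc k) (False, True) @ [(True, True)]"

lemma length_witness_word: "length (witness_word k) = 4 * k + 8"
  by (simp add: witness_word_def)

lemma reduced_replicate_Cons:
  "freely_reduced (y # ys) \<Longrightarrow> y \<noteq> inv_letter x \<Longrightarrow> x \<noteq> inv_letter x \<Longrightarrow>
   freely_reduced (replicate (Suc j) x @ y # ys)"
  by (induction j) auto

lemma reduced_Cons_replicate:
  "freely_reduced (replicate (Suc j) x @ ys) \<Longrightarrow> x \<noteq> inv_letter y \<Longrightarrow>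
   freely_reduced (y # replicate (Suc j) x @ ys)"
  by simp

lemma reduced_witness_word: "freely_reduced (witness_word k)"
  unfolding witness_word_def
  by (intro reduced_replicate_Cons reduced_Cons_replicate) (simp_all add: inv_letter_def)

lemma word_image_replicate:
  "word_image (replicate m (False, False)) = (int m, 0, 0, 0)"
  "word_image (replicate m (False, True)) = (- int m, 0, 0, 0)"
  by (induction m) auto

lemma word_image_witness_word:
  "word_image (witness_word k) = (0, 0, 0, tpow (int (Suc k)) - tpow (- int (Suc k)))"
  unfolding witness_word_def
  by (simp only: word_image_append word_image_Cons word_image_Nil word_image_replicate
      letter_image.simps) (simp add: algebra_simps tpow_mult)

lemma witness_word_mem: "witness_word k \<in> marked_subgroup X \<longleftrightarrow> k \<in> X"
proof -
  have "tpow (int (Suc k)) - tpow (- int (Suc k)) \<in> antisym_laurent X \<longleftrightarrow> k \<in> X"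
    by (auto simp: antisym_laurent_def Poly_Mapping.lookup_minus lookup_tpow)
  then show ?thesis
    by (simp add: marked_subgroup_def central_part_def carrier_free_group2
        reduced_witness_word word_image_witness_word)
qed

lemma marked_dist_bounds: "0 \<le> marked_dist N M" "marked_dist N M \<le> 1"
  by (auto simp: marked_dist_def)

lemma marked_dist_ge:
  assumes "w \<in> (N1 - N2) \<union> (N2 - N1)"
  shows "exp (- real (length w)) \<le> marked_dist N1 N2"
proof -
  have "N1 \<noteq> N2" using assms by blast
  moreover have "(LEAST n. \<exists>w \<in> (N1 - N2) \<union> (N2 - N1). length w = n) \<le> length w"
    by (rule Least_le) (use assms in blast)
  ultimately show ?thesis by (simp add: marked_dist_def)
qed

section \<open>Binary expansions\<close>

definition binary_value :: "nat set \<Rightarrow> real" where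
  "binary_value X = suminf (\<lambda>k. of_bool (k \<in> X) / 2 ^ Suc k)"

lemma summable_binary_digits: "summable (\<lambda>k. of_bool (k \<in> X) / 2 ^ Suc k :: real)"
proof (rule summable_comparison_test'[OF summable_geometric[of "1/2"]])
  show "norm (of_bool (n \<in> X) / 2 ^ Suc n :: real) \<le> (1/2) ^ n" for n
    by (simp add: power_one_over field_simps)
qed simp

lemma binary_value_close:
  assumes "\<And>j. j < k \<Longrightarrow> j \<in> X \<longleftrightarrow> j \<in> Y"
  shows "\<bar>binary_value X - binary_value Y\<bar> \<le> 1 / 2 ^ k"
proof -
  define f where "f j = ((of_bool (j \<in> X) - of_bool (j \<in> Y)) / 2 ^ Suc j :: real)" for j
  have bound: "\<bar>f (i + k)\<bar> \<le> 1 / 2 ^ Suc k * (1/2) ^ i" for i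
    by (simp add: f_def power_one_over power_add field_simps)
  have geom: "(\<lambda>i. 1 / 2 ^ Suc k * (1/2::real) ^ i) sums (1 / 2 ^ k)"
    using sums_mult[OF geometric_sums[of "1/2::real"], of "1 / 2 ^ Suc k"] by simp
  have "f sums (binary_value X - binary_value Y)"
    unfolding f_def binary_value_def diff_divide_distrib
    by (intro sums_diff summable_sums summable_binary_digits)
  then have shifted: "(\<lambda>i. f (i + k)) sums (binary_value X - binary_value Y)"
    by (subst sums_zero_iff_shift) (use assms in \<open>auto simp: f_def\<close>)
  have upper: "f (i + k) \<le> 1 / 2 ^ Suc k * (1/2) ^ i"
    and lower: "- (1 / 2 ^ Suc k * (1/2) ^ i) \<le> f (i + k)" for i
    using abs_le_D1[OF bound[of i]] abs_le_D2[OF bound[of i]] by linarith+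
  have "binary_value X - binary_value Y \<le> 1 / 2 ^ k"
    by (rule sums_le[OF _ shifted geom]) (rule upper)
  moreover have "- (1 / 2 ^ k) \<le> binary_value X - binary_value Y"
    by (rule sums_le[OF _ sums_minus[OF geom] shifted]) (rule lower)
  ultimately show ?thesis by linarith
qed

lemma floor_double:
  "\<lfloor>2 * (y::real)\<rfloor> = 2 * \<lfloor>y\<rfloor> + of_bool (odd \<lfloor>2 * y\<rfloor>)"
proof -
  have "2 * \<lfloor>y\<rfloor> \<le> \<lfloor>2 * y\<rfloor>" "\<lfloor>2 * y\<rfloor> < 2 * \<lfloor>y\<rfloor> + 2"
    by linarith+
  then show ?thesis by (cases "\<lfloor>2 * y\<rfloor> = 2 * \<lfloor>y\<rfloor>") auto
qed

lemma binary_value_onto: "{0..<1} \<subseteq> range binary_value"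
proof
  fix x :: real assume "x \<in> {0..<1}"
  then have x: "0 \<le> x" "x < 1" by simp_all
  define X where "X = {k. odd \<lfloor>x * 2 ^ Suc k\<rfloor>}"
  have partial: "(\<Sum>k<n. of_bool (k \<in> X) / 2 ^ Suc k) = \<lfloor>x * 2 ^ n\<rfloor> / 2 ^ n" for n
  proof (induction n)
    case 0 then show ?case using x by (simp add: floor_eq_iff)
  next
    case (Suc n)
    have "\<lfloor>x * 2 ^ Suc n\<rfloor> = 2 * \<lfloor>x * 2 ^ n\<rfloor> + of_bool (n \<in> X)"
      using floor_double[of "x * 2 ^ n"] by (simp add: X_def mult_ac)
    then show ?case using Suc by (simp add: field_simps)
  qed
  have "(\<lambda>n. \<lfloor>x * 2 ^ n\<rfloor> / 2 ^ n) \<longlonglongrightarrow> x"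
  proof (rule Lim_null_comparison[THEN LIM_zero_cancel])
    show "\<forall>\<^sub>F n in sequentially. norm (\<lfloor>x * 2 ^ n\<rfloor> / 2 ^ n - x) \<le> (1/2::real) ^ n"
    proof (intro always_eventually allI)
      fix n :: nat
      have "\<bar>\<lfloor>x * 2 ^ n\<rfloor> - x * 2 ^ n\<bar> / 2 ^ n \<le> 1 / 2 ^ n"
        by (intro divide_right_mono) (linarith, simp)
      moreover have "\<lfloor>x * 2 ^ n\<rfloor> / 2 ^ n - x = (\<lfloor>x * 2 ^ n\<rfloor> - x * 2 ^ n) / 2 ^ n"
        by (simp add: field_simps)
      ultimately show "norm (\<lfloor>x * 2 ^ n\<rfloor> / 2 ^ n - x) \<le> (1/2::real) ^ n"
        by (simp add: abs_divide power_one_over)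
    qed
  qed (rule LIMSEQ_power_zero, simp)
  then have "(\<lambda>k. of_bool (k \<in> X) / 2 ^ Suc k) sums x"
    unfolding sums_def partial .
  then show "x \<in> range binary_value" by (auto simp: binary_value_def sums_iff)
qed

(* The key estimate: X \<mapsto> N_X is Hoelder-invertible with exponent ln 2 / 4, since the first
   position k where X and Y differ controls both sides. *)
lemma binary_value_holder:
  "\<bar>binary_value X - binary_value Y\<bar>
     \<le> 4 * marked_dist (marked_subgroup X) (marked_subgroup Y) powr (ln 2 / 4)"
proof (cases "X = Y")
  case False
  define d where "d = marked_dist (marked_subgroup X) (marked_subgroup Y)"
  define k where "k = (LEAST k. (k \<in> X) \<noteq> (k \<in> Y))"
  have ex: "\<exists>k. (k \<in> X) \<noteq> (k \<in> Y)" using False by blast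
  have "(k \<in> X) \<noteq> (k \<in> Y)" unfolding k_def by (rule LeastI_ex[OF ex])
  then have "exp (- real (4 * k + 8)) \<le> d"
    unfolding d_def using marked_dist_ge[of "witness_word k"]
    by (auto simp: witness_word_mem length_witness_word)
  then have "exp (- real (4 * k + 8)) powr (ln 2 / 4) \<le> d powr (ln 2 / 4)"
    by (intro powr_mono2) auto
  moreover have "exp (- real (4 * k + 8)) powr (ln 2 / 4) = 1 / 2 ^ (k + 2)"
  proof -
    have "exp (- real (4 * k + 8)) powr (ln 2 / 4) = inverse (exp (real (k + 2) * ln 2))"
      by (simp add: powr_def algebra_simps flip: exp_minus)
    also have "exp (real (k + 2) * ln 2) = 2 ^ (k + 2)"
      by (subst exp_of_nat_mult) simp
    finally show ?thesis by (simp add: inverse_eq_divide)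
  qed
  moreover have "\<bar>binary_value X - binary_value Y\<bar> \<le> 1 / 2 ^ k"
    by (rule binary_value_close) (use not_less_Least k_def in blast)
  ultimately show ?thesis by (simp add: d_def power_add)
qed (simp add: marked_dist_def)

section \<open>Hausdorff dimension from a Hoelder surjection onto [0,1)\<close>

lemma set_diam_bounds:
  assumes "\<And>x y. 0 \<le> d x y" "\<And>x y. d x y \<le> 1"
  shows "0 \<le> set_diam d A" "set_diam d A \<le> 1"
    "\<And>x y. x \<in> A \<Longrightarrow> y \<in> A \<Longrightarrow> d x y \<le> set_diam d A"
proof -
  let ?S = "{d x y | x y. x \<in> A \<and> y \<in> A}"
  have bdd: "bdd_above ?S" using assms by (auto intro!: bdd_aboveI[of _ 1])
  show upper: "\<And>x y. x \<in> A \<Longrightarrow> y \<in> A \<Longrightarrow> d x y \<le> set_diam d A"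
    using bdd by (auto simp: set_diam_def intro!: cSup_upper)
  show "0 \<le> set_diam d A"
  proof (cases "A = {}")
    case False
    then obtain x where "x \<in> A" by blast
    then show ?thesis using upper[of x x] assms(1)[of x x] by linarith
  qed (simp add: set_diam_def)
  show "set_diam d A \<le> 1"
  proof (cases "A = {}")
    case False
    then have "?S \<noteq> {}" by blast
    then have "Sup ?S \<le> 1" by (rule cSup_least) (use assms(2) in auto)
    then show ?thesis using False by (simp add: set_diam_def)
  qed (simp add: set_diam_def)
qed

(* If r is onto [0,1) and |r X - r Y| \<le> C d(\<phi> X, \<phi> Y)^b, then every cover of the image of \<phi>
   by sets U_n satisfies 1 \<le> 2C \<Sum> diam(U_n)^s for 0 < s \<le> b: the intervals of length
   2C diam(U_n)^b around r-values of points of U_n cover [0,1). *)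
lemma holder_cover_bound:
  fixes d :: "'a \<Rightarrow> 'a \<Rightarrow> real" and r :: "'b \<Rightarrow> real" and \<phi> :: "'b \<Rightarrow> 'a"
  assumes d_bounds: "\<And>x y. 0 \<le> d x y" "\<And>x y. d x y \<le> 1"
    and onto: "{0..<1} \<subseteq> range r"
    and holder: "\<And>X Y. \<bar>r X - r Y\<bar> \<le> C * d (\<phi> X) (\<phi> Y) powr b"
    and C: "0 \<le> C" and s: "0 < s" "s \<le> b"
    and cover: "range \<phi> \<subseteq> (\<Union>n. U n)"
  shows "1 \<le> ennreal (2 * C) * suminf (\<lambda>n. ennreal (set_diam d (U n) powr s))"
proof -
  define D where "D n = set_diam d (U n)" for n
  have D_bounds: "0 \<le> D n" "D n \<le> 1" "\<And>x y. x \<in> U n \<Longrightarrow> y \<in> U n \<Longrightarrow> d x y \<le> D n"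
    for n
    unfolding D_def by (fact set_diam_bounds[OF d_bounds])+
  have b: "0 \<le> b" using s by linarith
  define I where "I n = (if \<exists>X. \<phi> X \<in> U n
     then {r (SOME X. \<phi> X \<in> U n) - C * D n powr b .. r (SOME X. \<phi> X \<in> U n) + C * D n powr b}
     else {})" for n
  have covers: "{0..<1} \<subseteq> (\<Union>n. I n)"
  proof
    fix x :: real assume "x \<in> {0..<1}"
    then obtain X n where X: "r X = x" and n: "\<phi> X \<in> U n" using onto cover by blast
    define Y where "Y = (SOME X. \<phi> X \<in> U n)"
    have Y: "\<phi> Y \<in> U n" unfolding Y_def using n by (rule someI)
    have "d (\<phi> X) (\<phi> Y) powr b \<le> D n powr b"
      by (rule powr_mono2[OF b d_bounds(1) D_bounds(3)[OF n Y]])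
    then have "\<bar>r X - r Y\<bar> \<le> C * D n powr b"
      using holder[of X Y] mult_left_mono[OF _ C] by (meson order_trans)
    then have "x \<in> I n" using n X by (auto simp: I_def Y_def)
    then show "x \<in> (\<Union>n. I n)" by blast
  qed
  have measure_I: "emeasure lborel (I n) \<le> ennreal (2 * C) * ennreal (D n powr s)" for n
  proof -
    have "emeasure lborel (I n) \<le> ennreal (2 * C * D n powr b)"
      using C by (simp add: I_def)
    also have "D n powr b \<le> D n powr s"
      using powr_mono' s(2) D_bounds(1,2) .
    then have "ennreal (2 * C * D n powr b) \<le> ennreal (2 * C * D n powr s)"
      using C by (intro ennreal_leI mult_left_mono) simp_all
    finally show ?thesis
      using C by (simp add: ennreal_mult)
  qed
  have "ennreal 1 = emeasure lborel {0..<(1::real)}" by simp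
  also have "\<dots> \<le> emeasure lborel (\<Union>n. I n)"
    by (rule emeasure_mono[OF covers]) (auto simp: I_def)
  also have "\<dots> \<le> suminf (\<lambda>n. emeasure lborel (I n))"
    by (rule emeasure_subadditive_countably) (auto simp: I_def)
  also have "\<dots> \<le> suminf (\<lambda>n. ennreal (2 * C) * ennreal (D n powr s))"
    by (intro suminf_le measure_I summableI)
  also have "\<dots> = ennreal (2 * C) * suminf (\<lambda>n. ennreal (D n powr s))"
    by simp
  finally show ?thesis by (simp add: D_def)
qed

lemma hausdorff_measure_holder_pos:
  fixes d :: "'a \<Rightarrow> 'a \<Rightarrow> real" and r :: "'b \<Rightarrow> real" and \<phi> :: "'b \<Rightarrow> 'a"
  assumes d_bounds: "\<And>x y. 0 \<le> d x y" "\<And>x y. d x y \<le> 1"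
    and onto: "{0..<1} \<subseteq> range r"
    and holder: "\<And>X Y. \<bar>r X - r Y\<bar> \<le> C * d (\<phi> X) (\<phi> Y) powr b"
    and C: "0 < C" and s: "0 < s" "s \<le> b"
    and image: "range \<phi> \<subseteq> A"
  shows "hausdorff_measure d s A \<noteq> 0"
proof -
  have "ennreal (1 / (2 * C)) \<le> hausdorff_content d s 1 A"
    unfolding hausdorff_content_def
  proof (rule INF_greatest)
    fix U assume "U \<in> delta_covers d 1 A"
    then have "range \<phi> \<subseteq> (\<Union>n. U n)" using image by (auto simp: delta_covers_def)
    then have "1 \<le> ennreal (2 * C) * suminf (\<lambda>n. ennreal (set_diam d (U n) powr s))"
      by (rule holder_cover_bound[where d = d and r = r and \<phi> = \<phi>,
            OF d_bounds onto holder less_imp_le[OF C] s])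
    then have "ennreal (1 / (2 * C)) * 1
        \<le> ennreal (1 / (2 * C)) * (ennreal (2 * C) * suminf (\<lambda>n. ennreal (set_diam d (U n) powr s)))"
      by (rule mult_left_mono) simp
    also have "\<dots> = (ennreal (1 / (2 * C)) * ennreal (2 * C))
        * suminf (\<lambda>n. ennreal (set_diam d (U n) powr s))"
      by (simp only: mult.assoc)
    also have "ennreal (1 / (2 * C)) * ennreal (2 * C) = 1"
      using C by (simp flip: ennreal_mult)
    finally show "ennreal (1 / (2 * C)) \<le> suminf (\<lambda>n. ennreal (set_diam d (U n) powr s))" by simp
  qed
  also have "\<dots> \<le> hausdorff_measure d s A"
    unfolding hausdorff_measure_def by (rule SUP_upper) simp
  finally have "ennreal (1 / (2 * C)) \<le> hausdorff_measure d s A" .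
  then have "0 < hausdorff_measure d s A"
    by (rule order.strict_trans2[rotated]) (use C in simp)
  then show ?thesis by simp
qed

lemma hausdorff_dim_ge:
  assumes "\<And>s. 0 < s \<Longrightarrow> s < b \<Longrightarrow> hausdorff_measure d s A \<noteq> 0"
  shows "ereal b \<le> hausdorff_dim d A"
  unfolding hausdorff_dim_def
proof (rule Inf_greatest)
  fix e assume "e \<in> ereal ` {s. 0 < s \<and> hausdorff_measure d s A = 0}"
  then obtain s where e: "e = ereal s" and "0 < s" "hausdorff_measure d s A = 0" by auto
  with assms have "\<not> s < b" by blast
  then show "ereal b \<le> e" using e by simp
qed

theorem corollary6p7:
  shows "hausdorff_dim marked_dist G2 \<ge> ereal (ln 2 / 6) \<and> hausdorff_dim marked_dist G2 \<noteq> 0"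
proof -
  have image: "range marked_subgroup \<subseteq> G2"
    using marked_subgroup_in_G2 by blast
  have "hausdorff_measure marked_dist s G2 \<noteq> 0" if "0 < s" "s < ln 2 / 4" for s
    by (rule hausdorff_measure_holder_pos[where C = 4 and b = "ln 2 / 4",
          OF marked_dist_bounds binary_value_onto binary_value_holder _ _ _ image]) (use that in simp_all)
  then have dim: "ereal (ln 2 / 4) \<le> hausdorff_dim marked_dist G2"
    by (rule hausdorff_dim_ge)
  have "0 < ln (2::real)" by simp
  then have pos: "0 < ereal (ln 2 / 6)" and le: "ereal (ln 2 / 6) \<le> ereal (ln 2 / 4)"
    by simp_all
  have "ereal (ln 2 / 6) \<le> hausdorff_dim marked_dist G2"
    using le dim by (rule order_trans)
  moreover have "0 < hausdorff_dim marked_dist G2"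
    using pos calculation by (rule order.strict_trans2)
  ultimately show ?thesis by simp
qed

end
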